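(* For every integer $d\ge 4$ there exists a real solvable Lie algebra $\mathfrak{g}$ of dimension $d$ together with subalgebras $\mathfrak{g}_1,\mathfrak{g}_2$ of $\mathfrak{g}$ such that $\mathfrak{g}\cong\mathfrak{g}_1\underline{\times}\mathfrak{g}_2$.
   Context: All Lie algebras are finite-dimensional over $\mathbb{R}$; $b_1(\mathfrak{g})=\dim\mathfrak{g}/[\mathfrak{g},\mathfrak{g}]$. Product by generators: given Lie algebras $\mathfrak{g}_1,\mathfrak{g}_2$ with $m_i=b_1(\mathfrak{g}_i)$, choose linear forms $\omega_1,\dots,\omega_{m_1}$ on $\mathfrak{g}_1$ vanishing on $[\mathfrak{g}_1,\mathfrak{g}_1]$ and inducing a basis of $(\mathfrak{g}_1/[\mathfrak{g}_1,\mathfrak{g}_1])^*$, and similarly $\omega'_1,\dots,\omega'_{m_2}$ for $\mathfrak{g}_2$. Then $\mathfrak{g}_1\underline{\times}\mathfrak{g}_2$ is the Lie algebra with underlying space $\mathfrak{g}_1\oplus\mathfrak{g}_2\oplus\mathbb{R}^{m_1m_2}$ (basis $Z_{ij}$, $1\le i\le m_1$, $1\le j\le m_2$, of the last summand), whose bracket restricts to the given brackets on $\mathfrak{g}_1$ and on $\mathfrak{g}_2$, the $Z_{ij}$ are central, and $[x,y]=\sum_{i,j}\omega_i(x)\omega'_j(y)Z_{ij}$ for $x\in\mathfrak{g}_1$, $y\in\mathfrak{g}_2$. Equivalently, it is the central extension of $\mathfrak{g}_1\oplus\mathfrak{g}_2$ obtained by adding Maurer–Cartan forms $\eta_{ij}$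 with $d\eta_{ij}=\omega_i\wedge\omega'_j$; its dimension is $\dim\mathfrak{g}_1+\dim\mathfrak{g}_2+m_1m_2$. *)

theory Defs
  imports "HOL-Analysis.Analysis" "HOL-Analysis.Finite_Function_Topology"
begin

text \<open>Finite-dimensional real Lie algebras, realised as a subspace V of a real
vector space together with a bracket br (only its values on V matter).\<close>

definition fin_dim :: "'a::real_vector set \<Rightarrow> bool" where
  "fin_dim V \<longleftrightarrow> (\<exists>B. finite B \<and> B \<subseteq> V \<and> V = span B)"

definition lie_algebra :: "'a::real_vector set \<Rightarrow> ('a \<Rightarrow> 'a \<Rightarrow> 'a) \<Rightarrow> bool" where
  "lie_algebra V br \<longleftrightarrow> subspace V \<and> fin_dim V \<and>
     (\<forall>x\<in>V. \<forall>y\<in>V. br x y \<in> V) \<and>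
     (\<forall>x\<in>V. \<forall>y\<in>V. \<forall>z\<in>V. br (x + y) z = br x z + br y z) \<and>
     (\<forall>x\<in>V. \<forall>y\<in>V. \<forall>z\<in>V. br x (y + z) = br x y + br x z) \<and>
     (\<forall>a. \<forall>x\<in>V. \<forall>y\<in>V. br (a *\<^sub>R x) y = a *\<^sub>R br x y) \<and>
     (\<forall>a. \<forall>x\<in>V. \<forall>y\<in>V. br x (a *\<^sub>R y) = a *\<^sub>R br x y) \<and>
     (\<forall>x\<in>V. br x x = 0) \<and>
     (\<forall>x\<in>V. \<forall>y\<in>V. \<forall>z\<in>V. br x (br y z) + br y (br z x) + br z (br x y) = 0)"

definition derived :: "'a::real_vector set \<Rightarrow> ('a \<Rightarrow> 'a \<Rightarrow> 'a) \<Rightarrow> 'a set" where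
  "derived V br = span {br x y | x y. x \<in> V \<and> y \<in> V}"

fun derived_series :: "'a::real_vector set \<Rightarrow> ('a \<Rightarrow> 'a \<Rightarrow> 'a) \<Rightarrow> nat \<Rightarrow> 'a set" where
  "derived_series V br 0 = V"
| "derived_series V br (Suc k) = derived (derived_series V br k) br"

definition solvable_lie :: "'a::real_vector set \<Rightarrow> ('a \<Rightarrow> 'a \<Rightarrow> 'a) \<Rightarrow> bool" where
  "solvable_lie V br \<longleftrightarrow> (\<exists>k. derived_series V br k = {0})"

definition lie_subalgebra :: "'a::real_vector set \<Rightarrow> 'a set \<Rightarrow> ('a \<Rightarrow> 'a \<Rightarrow> 'a) \<Rightarrow> bool" where
  "lie_subalgebra W V br \<longleftrightarrow> subspace W \<and> W \<subseteq> V \<and> (\<forall>x\<in>W. \<forall>y\<in>W. br x y \<in> W)"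

definition betti1 :: "'a::real_vector set \<Rightarrow> ('a \<Rightarrow> 'a \<Rightarrow> 'a) \<Rightarrow> nat" where
  "betti1 V br = dim V - dim (derived V br)"

definition linear_on :: "'a::real_vector set \<Rightarrow> ('a \<Rightarrow> 'b::real_vector) \<Rightarrow> bool" where
  "linear_on V f \<longleftrightarrow> (\<forall>x\<in>V. \<forall>y\<in>V. f (x + y) = f x + f y) \<and>
                    (\<forall>a. \<forall>x\<in>V. f (a *\<^sub>R x) = a *\<^sub>R f x)"

text \<open>omega 0, ..., omega (b1-1): linear forms on V vanishing on [V,V] that are linearly
  independent on V, i.e. that induce a basis of the dual of V/[V,V].\<close>
definition generator_forms :: "'a::real_vector set \<Rightarrow> ('a \<Rightarrow> 'a \<Rightarrow> 'a) \<Rightarrow> (nat \<Rightarrow> 'a \<Rightarrow> real) \<Rightarrow> bool" where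
  "generator_forms V br \<omega> \<longleftrightarrow>
     (\<forall>i < betti1 V br. linear_on V (\<omega> i) \<and> (\<forall>x\<in>V. \<forall>y\<in>V. \<omega> i (br x y) = 0)) \<and>
     (\<forall>c::nat \<Rightarrow> real. (\<forall>x\<in>V. (\<Sum>i<betti1 V br. c i * \<omega> i x) = 0) \<longrightarrow>
        (\<forall>i < betti1 V br. c i = 0))"

text \<open>Product by generators: underlying space V1 (+) V2 (+) R^(m1*m2), the last summand
  realised as finitely supported functions on pairs (i,j), i<m1, j<m2.\<close>
definition gp_Z :: "(nat \<Rightarrow> 'a \<Rightarrow> real) \<Rightarrow> (nat \<Rightarrow> 'b \<Rightarrow> real) \<Rightarrow> nat \<Rightarrow> nat \<Rightarrow> 'a \<Rightarrow> 'b
     \<Rightarrow> (nat \<times> nat, real) poly_mapping" where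
  "gp_Z \<omega> \<omega>' m1 m2 x y =
     (\<Sum>i<m1. \<Sum>j<m2. (\<omega> i x * \<omega>' j y) *\<^sub>R Poly_Mapping.single (i, j) (1::real))"

definition gen_prod_carrier :: "'a::real_vector set \<Rightarrow> 'b::real_vector set \<Rightarrow> nat \<Rightarrow> nat
     \<Rightarrow> ('a \<times> 'b \<times> ((nat \<times> nat, real) poly_mapping)) set" where
  "gen_prod_carrier V1 V2 m1 m2 =
     {(x, y, z). x \<in> V1 \<and> y \<in> V2 \<and> Poly_Mapping.keys z \<subseteq> {..<m1} \<times> {..<m2}}"

definition gen_prod_bracket :: "('a::real_vector \<Rightarrow> 'a \<Rightarrow> 'a) \<Rightarrow> ('b::real_vector \<Rightarrow> 'b \<Rightarrow> 'b)
     \<Rightarrow> (nat \<Rightarrow> 'a \<Rightarrow> real) \<Rightarrow> (nat \<Rightarrow> 'b \<Rightarrow> real) \<Rightarrow> nat \<Rightarrow> nat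
     \<Rightarrow> ('a \<times> 'b \<times> ((nat \<times> nat, real) poly_mapping)) \<Rightarrow> ('a \<times> 'b \<times> ((nat \<times> nat, real) poly_mapping))
     \<Rightarrow> ('a \<times> 'b \<times> ((nat \<times> nat, real) poly_mapping))" where
  "gen_prod_bracket br1 br2 \<omega> \<omega>' m1 m2 =
     (\<lambda>(x, y, z) (x', y', z'). (br1 x x', br2 y y',
        gp_Z \<omega> \<omega>' m1 m2 x y' - gp_Z \<omega> \<omega>' m1 m2 x' y))"

definition lie_iso :: "'a::real_vector set \<Rightarrow> ('a \<Rightarrow> 'a \<Rightarrow> 'a) \<Rightarrow> 'b::real_vector set
     \<Rightarrow> ('b \<Rightarrow> 'b \<Rightarrow> 'b) \<Rightarrow> bool" where
  "lie_iso V br V' br' \<longleftrightarrow> (\<exists>f. linear_on V f \<and> bij_betw f V V' \<and>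
      (\<forall>x\<in>V. \<forall>y\<in>V. f (br x y) = br' (f x) (f y)))"

end

theory Submission
  imports Defs
begin

text \<open>For odd d = 2n + 1 take g1 = R e_0 and g2 = span {e_1, ..., e_n} abelian; for even
  d = 2n let e_(n-1), e_n span the affine algebra, [e_(n-1), e_n] = e_n, so that b1(g2) drops
  to n - 1. The forms e_0^* and e_1^*, ..., e_(b1(g2))^* are generators, and the product by
  generators is realised on e_0, ..., e_(d-1) by letting e_(n+1+j) play Z_(0,j), i.e.
  [e_0, e_j] = e_(n+j). The result is 2-step solvable: the bracket only reads the coordinates
  at e_0 and e_(n-1), and these vanish on the derived algebra.\<close>

lemma lookup_scaleR [simp]:
  "Poly_Mapping.lookup (r *\<^sub>R p) k = r *\<^sub>R Poly_Mapping.lookup p k"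
proof -
  have "finite {i. r *\<^sub>R Poly_Mapping.lookup p i \<noteq> 0}"
    by (rule finite_subset[OF _ finite_lookup[of p]]) auto
  then show ?thesis by (simp add: scaleR_poly_mapping_def)
qed

declare lookup_add [simp] lookup_minus [simp]

lemma lookup_sum_single:
  "finite K \<Longrightarrow> Poly_Mapping.lookup (\<Sum>k\<in>K. Poly_Mapping.single k (g k)) i = (if i \<in> K then g i else 0)"
  by (simp add: lookup_sum lookup_single when_def sum.delta)

definition coord_subspace :: "'k set \<Rightarrow> ('k, real) poly_mapping set" where
  "coord_subspace K = {p. \<forall>k. k \<notin> K \<longrightarrow> Poly_Mapping.lookup p k = 0}"

lemma single_in_coord_subspace: "k \<in> K \<Longrightarrow> Poly_Mapping.single k a \<in> coord_subspace K"
  by (simp add: coord_subspace_def lookup_single when_def)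

lemma coord_subspace_empty [simp]: "coord_subspace {} = {0}"
  by (auto simp: coord_subspace_def intro: poly_mapping_eqI)

lemma coord_subspace_eq_zero_iff [simp]: "coord_subspace K = {0} \<longleftrightarrow> K = {}"
proof
  assume "coord_subspace K = {0}"
  then have "Poly_Mapping.single k (1::real) = 0" if "k \<in> K" for k
    using single_in_coord_subspace[OF that] by blast
  then show "K = {}"
    by (metis all_not_in_conv lookup_single_eq zero_neq_one lookup_zero)
qed simp

lemma subspace_coord_subspace: "subspace (coord_subspace K)"
  unfolding subspace_def coord_subspace_def by auto

lemma single_eq_scaleR_single_one: "Poly_Mapping.single k c = c *\<^sub>R Poly_Mapping.single k (1::real)"
  by (rule poly_mapping_eqI) (simp add: lookup_single when_def)

lemma coord_subspace_eq_span:
  assumes "finite K"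
  shows "coord_subspace K = span ((\<lambda>k. Poly_Mapping.single k 1) ` K)"
proof (rule span_subspace[symmetric])
  show "(\<lambda>k. Poly_Mapping.single k 1) ` K \<subseteq> coord_subspace K"
    by (auto intro: single_in_coord_subspace)
  show "coord_subspace K \<subseteq> span ((\<lambda>k. Poly_Mapping.single k 1) ` K)"
  proof
    fix p assume p: "p \<in> coord_subspace K"
    have "p = (\<Sum>k\<in>K. Poly_Mapping.single k (Poly_Mapping.lookup p k))"
      using p assms by (intro poly_mapping_eqI) (auto simp: lookup_sum_single coord_subspace_def)
    also have "\<dots> \<in> span ((\<lambda>k. Poly_Mapping.single k 1) ` K)"
      by (subst single_eq_scaleR_single_one) (intro span_sum span_scale span_base; simp)
    finally show "p \<in> span ((\<lambda>k. Poly_Mapping.single k 1) ` K)" .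
  qed
qed (rule subspace_coord_subspace)

lemma inj_single_one: "inj (\<lambda>k. Poly_Mapping.single k (1::real))"
  by (rule injI) (metis lookup_single_eq lookup_single_not_eq one_neq_zero)

lemma independent_singles:
  fixes K :: "'k set"
  assumes "finite K"
  shows "independent ((\<lambda>k. Poly_Mapping.single k (1::real)) ` K)"
proof (rule independent_if_scalars_zero)
  fix u :: "('k, real) poly_mapping \<Rightarrow> real" and b :: "('k, real) poly_mapping"
  assume sum: "(\<Sum>v\<in>(\<lambda>k. Poly_Mapping.single k (1::real)) ` K. u v *\<^sub>R v) = 0"
    and b: "b \<in> (\<lambda>k. Poly_Mapping.single k (1::real)) ` K"
  obtain k where k: "k \<in> K" "b = Poly_Mapping.single k 1" using b by blast
  have inj: "inj_on (\<lambda>k. Poly_Mapping.single k (1::real)) K"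
    using inj_single_one by (rule inj_on_subset) simp
  have "0 = Poly_Mapping.lookup (\<Sum>v\<in>(\<lambda>k. Poly_Mapping.single k (1::real)) ` K. u v *\<^sub>R v) k"
    by (simp add: sum)
  also have "\<dots> = (\<Sum>j\<in>K. if j = k then u (Poly_Mapping.single j 1) else 0)"
    unfolding sum.reindex[OF inj] lookup_sum by (intro sum.cong) (auto simp: lookup_single when_def)
  also have "\<dots> = u b" using assms k by simp
  finally show "u b = 0" by simp
qed (use assms in simp)

lemma dim_coord_subspace: "finite K \<Longrightarrow> dim (coord_subspace K) = card K"
  using dim_span_eq_card_independent[OF independent_singles] coord_subspace_eq_span
    card_image[OF inj_on_subset[OF inj_single_one]] by (metis subset_UNIV)

lemma fin_dim_coord_subspace: "finite K \<Longrightarrow> fin_dim (coord_subspace K)"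
  unfolding fin_dim_def using coord_subspace_eq_span span_superset
  by (metis finite_imageI)

lemma span_subset_zero: "S \<subseteq> {0} \<Longrightarrow> span S = {0}"
  by (metis span_empty span_insert_0 subset_singletonD)

lemma solvable_lie_if_derived_abelian:
  assumes "\<forall>x\<in>derived V br. \<forall>y\<in>derived V br. br x y = 0"
  shows "solvable_lie V br"
proof -
  have "{br x y | x y. x \<in> derived V br \<and> y \<in> derived V br} \<subseteq> {0}"
    using assms by auto
  then have "derived (derived V br) br = {0}"
    unfolding derived_def[of "derived V br"] by (rule span_subset_zero)
  then show ?thesis
    unfolding solvable_lie_def by (intro exI[of _ 2]) (simp add: numeral_2_eq_2)
qed

text \<open>In the basis e_k = single k 1, with a = of_bool aff:
  [e_0, e_j] = e_(n+j) for 1 \<le> j \<le> n - a, and [e_(n-1), e_n] = a e_n.\<close>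

lift_definition model_bracket ::
    "nat \<Rightarrow> bool \<Rightarrow> (nat, real) poly_mapping \<Rightarrow> (nat, real) poly_mapping \<Rightarrow> (nat, real) poly_mapping"
  is "\<lambda>n aff p q k.
      (if aff \<and> k = n then p (n - 1) * q n - p n * q (n - 1) else 0)
    + (if n < k \<and> k \<le> 2 * n - of_bool aff then p 0 * q (k - n) - q 0 * p (k - n) else 0)"
  subgoal for n aff p q by (rule finite_subset[of _ "{..2 * n}"]) auto
  done

definition model_algebra :: "nat \<Rightarrow> bool \<Rightarrow> (nat, real) poly_mapping set" where
  "model_algebra n aff = coord_subspace {..2 * n - of_bool aff}"

lemma lie_algebra_model:
  assumes "n \<ge> 2"
  shows "lie_algebra (model_algebra n aff) (model_bracket n aff)"
  unfolding lie_algebra_def model_algebra_def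
proof (intro conjI ballI allI)
  show "subspace (coord_subspace {..2 * n - of_bool aff})" by (rule subspace_coord_subspace)
  show "fin_dim (coord_subspace {..2 * n - of_bool aff})" by (simp add: fin_dim_coord_subspace)
  fix x y z
  show "model_bracket n aff x y \<in> coord_subspace {..2 * n - of_bool aff}"
    using assms by (auto simp: coord_subspace_def model_bracket.rep_eq)
  show "model_bracket n aff (x + y) z = model_bracket n aff x z + model_bracket n aff y z"
    by (rule poly_mapping_eqI) (simp add: model_bracket.rep_eq algebra_simps)
  show "model_bracket n aff x (y + z) = model_bracket n aff x y + model_bracket n aff x z"
    by (rule poly_mapping_eqI) (simp add: model_bracket.rep_eq algebra_simps)
  show "model_bracket n aff x x = 0"
    by (rule poly_mapping_eqI) (simp add: model_bracket.rep_eq)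
  show "model_bracket n aff x (model_bracket n aff y z) + model_bracket n aff y (model_bracket n aff z x)
      + model_bracket n aff z (model_bracket n aff x y) = 0"
    using assms by (intro poly_mapping_eqI) (cases aff; auto simp: model_bracket.rep_eq algebra_simps)
  fix a
  show "model_bracket n aff (a *\<^sub>R x) y = a *\<^sub>R model_bracket n aff x y"
    by (rule poly_mapping_eqI) (simp add: model_bracket.rep_eq algebra_simps)
  show "model_bracket n aff x (a *\<^sub>R y) = a *\<^sub>R model_bracket n aff x y"
    by (rule poly_mapping_eqI) (simp add: model_bracket.rep_eq algebra_simps)
qed

lemma solvable_model:
  assumes "n \<ge> 2"
  shows "solvable_lie (model_algebra n aff) (model_bracket n aff)"
proof (rule solvable_lie_if_derived_abelian)
  let ?T = "{p. Poly_Mapping.lookup p 0 = 0 \<and> Poly_Mapping.lookup p (n - 1) = 0}"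
  have "subspace ?T" unfolding subspace_def by auto
  then have "derived (model_algebra n aff) (model_bracket n aff) \<subseteq> ?T"
    unfolding derived_def
    by (rule span_minimal[rotated]) (use assms in \<open>auto simp: model_bracket.rep_eq\<close>)
  moreover have "model_bracket n aff x y = 0" if "x \<in> ?T" "y \<in> ?T" for x y
    using that by (intro poly_mapping_eqI) (simp add: model_bracket.rep_eq)
  ultimately show "\<forall>x\<in>derived (model_algebra n aff) (model_bracket n aff).
      \<forall>y\<in>derived (model_algebra n aff) (model_bracket n aff). model_bracket n aff x y = 0"
    by blast
qed

lemma lie_subalgebra_model_left:
  assumes "n \<ge> 2"
  shows "lie_subalgebra (coord_subspace {0}) (model_algebra n aff) (model_bracket n aff)"
  unfolding lie_subalgebra_def model_algebra_def
  using assms by (intro conjI subspace_coord_subspace; auto simp: coord_subspace_def model_bracket.rep_eq)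

lemma lie_subalgebra_model_right:
  assumes "n \<ge> 2"
  shows "lie_subalgebra (coord_subspace {1..n}) (model_algebra n aff) (model_bracket n aff)"
  unfolding lie_subalgebra_def model_algebra_def
  using assms by (intro conjI subspace_coord_subspace; auto simp: coord_subspace_def model_bracket.rep_eq)

lemma derived_model_left:
  assumes "n \<ge> 2"
  shows "derived (coord_subspace {0}) (model_bracket n aff) = {0}"
  unfolding derived_def using assms
  by (intro span_subset_zero) (auto simp: coord_subspace_def model_bracket.rep_eq intro!: poly_mapping_eqI)

lemma derived_model_right:
  assumes "n \<ge> 2"
  shows "derived (coord_subspace {1..n}) (model_bracket n aff) = coord_subspace (if aff then {n} else {})"
  unfolding derived_def
proof (rule span_subspace)
  show "{model_bracket n aff x y |x y. x \<in> coord_subspace {1..n} \<and> y \<in> coord_subspace {1..n}}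
      \<subseteq> coord_subspace (if aff then {n} else {})"
    using assms by (auto simp: coord_subspace_def model_bracket.rep_eq)
  show "coord_subspace (if aff then {n} else {})
      \<subseteq> span {model_bracket n aff x y |x y. x \<in> coord_subspace {1..n} \<and> y \<in> coord_subspace {1..n}}"
  proof
    fix p assume p: "p \<in> coord_subspace (if aff then {n} else {})"
    have "p = model_bracket n aff (Poly_Mapping.single (n - 1) 1) (Poly_Mapping.single n (Poly_Mapping.lookup p n))"
      using p assms by (intro poly_mapping_eqI) (auto simp: coord_subspace_def model_bracket.rep_eq lookup_single when_def)
    moreover have "Poly_Mapping.single (n - 1) 1 \<in> coord_subspace {1..n}"
      "Poly_Mapping.single n (Poly_Mapping.lookup p n) \<in> coord_subspace {1..n}"
      using assms by (auto intro!: single_in_coord_subspace)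
    ultimately show "p \<in> span {model_bracket n aff x y |x y. x \<in> coord_subspace {1..n} \<and> y \<in> coord_subspace {1..n}}"
      by (intro span_base) blast
  qed
qed (rule subspace_coord_subspace)

lemma betti1_model_left:
  assumes "n \<ge> 2"
  shows "betti1 (coord_subspace {0}) (model_bracket n aff) = 1"
  unfolding betti1_def derived_model_left[OF assms]
  using dim_coord_subspace[of "{} :: nat set"] dim_coord_subspace[of "{0 :: nat}"] by simp

lemma betti1_model_right:
  assumes "n \<ge> 2"
  shows "betti1 (coord_subspace {1..n}) (model_bracket n aff) = n - of_bool aff"
  unfolding betti1_def derived_model_right[OF assms] by (simp add: dim_coord_subspace)

lemma generator_forms_model_left:
  assumes "n \<ge> 2"
  shows "generator_forms (coord_subspace {0}) (model_bracket n aff) (\<lambda>i x. Poly_Mapping.lookup x 0)"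
  unfolding generator_forms_def betti1_model_left[OF assms]
proof (intro conjI allI impI ballI)
  show "linear_on (coord_subspace {0}) (\<lambda>x. Poly_Mapping.lookup x 0)"
    by (simp add: linear_on_def)
  fix x y show "Poly_Mapping.lookup (model_bracket n aff x y) 0 = 0"
    using assms by (simp add: model_bracket.rep_eq)
next
  fix c :: "nat \<Rightarrow> real" and i :: nat
  assume "\<forall>x\<in>coord_subspace {0}. (\<Sum>i<1. c i * Poly_Mapping.lookup x 0) = 0" and "i < 1"
  then show "c i = 0"
    using single_in_coord_subspace[of 0 "{0}" 1] by auto
qed

lemma generator_forms_model_right:
  assumes "n \<ge> 2"
  shows "generator_forms (coord_subspace {1..n}) (model_bracket n aff) (\<lambda>j y. Poly_Mapping.lookup y (Suc j))"
  unfolding generator_forms_def betti1_model_right[OF assms]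
proof (intro conjI allI impI ballI)
  fix i assume "i < n - of_bool aff"
  then show "Poly_Mapping.lookup (model_bracket n aff x y) (Suc i) = 0" for x y
    using assms by (auto simp: model_bracket.rep_eq)
  show "linear_on (coord_subspace {1..n}) (\<lambda>x. Poly_Mapping.lookup x (Suc i))"
    by (simp add: linear_on_def)
next
  fix c :: "nat \<Rightarrow> real" and i :: nat
  assume vanish: "\<forall>x\<in>coord_subspace {1..n}. (\<Sum>i<n - of_bool aff. c i * Poly_Mapping.lookup x (Suc i)) = 0"
    and i: "i < n - of_bool aff"
  have "Poly_Mapping.single (Suc i) 1 \<in> coord_subspace {1..n}"
    using i by (intro single_in_coord_subspace) auto
  from vanish[rule_format, OF this] i show "c i = 0"
    by (simp add: lookup_single when_def if_distrib[of "times _"] sum.delta cong: if_cong)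
qed

lemma gp_Z_eq_sum_single:
  "gp_Z \<omega> \<omega>' m1 m2 x y = (\<Sum>ij\<in>{..<m1}\<times>{..<m2}. Poly_Mapping.single ij (\<omega> (fst ij) x * \<omega>' (snd ij) y))"
  by (simp add: gp_Z_def sum.cartesian_product single_eq_scaleR_single_one[symmetric] case_prod_beta)

lemma lookup_gp_Z:
  "Poly_Mapping.lookup (gp_Z \<omega> \<omega>' m1 m2 x y) (i, j) = (if i < m1 \<and> j < m2 then \<omega> i x * \<omega>' j y else 0)"
  by (simp add: gp_Z_eq_sum_single lookup_sum_single)

definition model_split :: "nat \<Rightarrow> nat \<Rightarrow> (nat, real) poly_mapping
    \<Rightarrow> (nat, real) poly_mapping \<times> (nat, real) poly_mapping \<times> (nat \<times> nat, real) poly_mapping" where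
  "model_split n m p =
    (Poly_Mapping.single 0 (Poly_Mapping.lookup p 0),
     (\<Sum>k\<in>{1..n}. Poly_Mapping.single k (Poly_Mapping.lookup p k)),
     (\<Sum>ij\<in>{0}\<times>{..<m}. Poly_Mapping.single ij (Poly_Mapping.lookup p (Suc n + snd ij))))"

definition model_join :: "nat \<Rightarrow> nat
    \<Rightarrow> (nat, real) poly_mapping \<times> (nat, real) poly_mapping \<times> (nat \<times> nat, real) poly_mapping
    \<Rightarrow> (nat, real) poly_mapping" where
  "model_join n m = (\<lambda>(x, y, z).
     x + y + (\<Sum>k\<in>{Suc n..n + m}. Poly_Mapping.single k (Poly_Mapping.lookup z (0, k - Suc n))))"

lemma lie_iso_model:
  assumes "n \<ge> 2"
  shows "lie_iso (model_algebra n aff) (model_bracket n aff)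
     (gen_prod_carrier (coord_subspace {0}) (coord_subspace {1..n}) 1 (n - of_bool aff))
     (gen_prod_bracket (model_bracket n aff) (model_bracket n aff)
        (\<lambda>i x. Poly_Mapping.lookup x 0) (\<lambda>j y. Poly_Mapping.lookup y (Suc j)) 1 (n - of_bool aff))"
  unfolding lie_iso_def
proof (intro exI[of _ "model_split n (n - of_bool aff)"] conjI ballI allI)
  show "linear_on (model_algebra n aff) (model_split n (n - of_bool aff))"
    unfolding linear_on_def model_split_def
    by (auto intro!: poly_mapping_eqI simp: lookup_sum_single lookup_single when_def)
  show "model_split n (n - of_bool aff) (model_bracket n aff p q) =
    gen_prod_bracket (model_bracket n aff) (model_bracket n aff) (\<lambda>i x. Poly_Mapping.lookup x 0)
      (\<lambda>j y. Poly_Mapping.lookup y (Suc j)) 1 (n - of_bool aff)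
      (model_split n (n - of_bool aff) p) (model_split n (n - of_bool aff) q)" for p q
    unfolding model_split_def gen_prod_bracket_def using assms
    by (auto intro!: poly_mapping_eqI simp: lookup_gp_Z lookup_sum_single lookup_single when_def model_bracket.rep_eq)
  show "bij_betw (model_split n (n - of_bool aff)) (model_algebra n aff)
      (gen_prod_carrier (coord_subspace {0}) (coord_subspace {1..n}) 1 (n - of_bool aff))"
  proof (rule bij_betwI[where g = "model_join n (n - of_bool aff)"])
    show "model_split n (n - of_bool aff) \<in> model_algebra n aff \<rightarrow>
        gen_prod_carrier (coord_subspace {0}) (coord_subspace {1..n}) 1 (n - of_bool aff)"
      unfolding model_split_def gen_prod_carrier_def
      by (auto simp: coord_subspace_def lookup_sum_single lookup_single when_def in_keys_iff split: if_splits)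
    show "model_join n (n - of_bool aff) \<in> gen_prod_carrier (coord_subspace {0}) (coord_subspace {1..n}) 1 (n - of_bool aff)
        \<rightarrow> model_algebra n aff"
      unfolding model_join_def gen_prod_carrier_def model_algebra_def
      by (auto simp: coord_subspace_def lookup_sum_single)
    show "model_join n (n - of_bool aff) (model_split n (n - of_bool aff) p) = p"
      if "p \<in> model_algebra n aff" for p
      using that unfolding model_join_def model_split_def model_algebra_def
      by (auto intro!: poly_mapping_eqI simp: coord_subspace_def lookup_sum_single lookup_single when_def)
    show "model_split n (n - of_bool aff) (model_join n (n - of_bool aff) t) = t"
      if "t \<in> gen_prod_carrier (coord_subspace {0}) (coord_subspace {1..n}) 1 (n - of_bool aff)" for t
      using that unfolding model_join_def model_split_def gen_prod_carrier_def
      by (auto intro!: poly_mapping_eqI simp: coord_subspace_def lookup_sum_single lookup_single when_def in_keys_iff)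
  qed
qed

theorem proposition2:
  fixes d :: nat
  assumes "d \<ge> 4"
  shows "\<exists>(V :: (nat, real) poly_mapping set) br V1 V2 \<omega> \<omega>'.
           lie_algebra V br \<and> dim V = d \<and> solvable_lie V br \<and>
           lie_subalgebra V1 V br \<and> lie_subalgebra V2 V br \<and> V1 \<noteq> {0} \<and> V2 \<noteq> {0} \<and>
           generator_forms V1 br \<omega> \<and> generator_forms V2 br \<omega>' \<and>
           lie_iso V br
             (gen_prod_carrier V1 V2 (betti1 V1 br) (betti1 V2 br))
             (gen_prod_bracket br br \<omega> \<omega>' (betti1 V1 br) (betti1 V2 br))"
proof -
  define n where "n = d div 2"
  define aff where "aff = even d"
  have n: "n \<ge> 2" using assms by (simp add: n_def)
  have dim: "dim (model_algebra n aff) = d"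
    unfolding model_algebra_def n_def aff_def using assms by (simp add: dim_coord_subspace)
  show ?thesis
    by (rule exI[of _ "model_algebra n aff"], rule exI[of _ "model_bracket n aff"],
        rule exI[of _ "coord_subspace {0}"], rule exI[of _ "coord_subspace {1..n}"],
        rule exI[of _ "\<lambda>i x. Poly_Mapping.lookup x 0"], rule exI[of _ "\<lambda>j y. Poly_Mapping.lookup y (Suc j)"])
      (unfold betti1_model_left[OF n] betti1_model_right[OF n],
       intro conjI dim lie_algebra_model[OF n] solvable_model[OF n]
         lie_subalgebra_model_left[OF n] lie_subalgebra_model_right[OF n]
         generator_forms_model_left[OF n] generator_forms_model_right[OF n] lie_iso_model[OF n];
       use n in simp)
qed

end
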